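(* Let $\mathcal{V}$ be a real vector space of dimension $d$, let $\tau\in\vee^2\mathcal{V}^*$ have rank $p+1$ and Lorentzian signature, and let $Lf_p(\mathcal{V},\tau)=\{(\tau_0,\dots,\tau_p)\in\mathcal{V}^{p+1}:\tau(\tau_A,\tau_B)=\eta_{AB}\}$ be the space of longitudinal frames. Then the longitudinal group $LG_p$, realised as the set of pairs $(\Lambda,V)$ with $\Lambda\in O(1,p)$ and $V=(V_0,\dots,V_p)\in\mathrm{Ker}(\tau)^{p+1}$, acts on $Lf_p(\mathcal{V},\tau)$ from the right by $\tau_A\cdot(\Lambda,V)={\Lambda^A}_B\tau_A+V_B$, and this action is free and transitive: for every $\tau_A,\tau'_A\in Lf_p(\mathcal{V},\tau)$ there is exactly one pair $(\Lambda,V)$ with $\tau'_B={\Lambda^A}_B\tau_A+V_B$. Thus $Lf_p(\mathcal{V},\tau)$ is an $LG_p$-torsor.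
   Context: $\eta_{AB}=\mathrm{diag}(-1,1,\dots,1)$; $\mathrm{Ker}(\tau)=\{v\in\mathcal{V}:\tau(v,\cdot)=0\}$, of dimension $d-p-1$. The longitudinal group $LG_p$ is the group of block matrices $\begin{pmatrix}\Lambda&0\\ v&\mathbb{1}\end{pmatrix}$ with $\Lambda\in O(1,p)$ and $v\in\mathbb{R}^{(d-p-1)\times(p+1)}$; its action on longitudinal frames is expressed with $V_B={v^i}_Be_i$ for a basis $e_i$ of $\mathrm{Ker}(\tau)$. *)

theory Defs
  imports "HOL-Analysis.Analysis"
begin

definition eta :: "nat \<Rightarrow> nat \<Rightarrow> real" where
  "eta A B = (if A = B then (if A = 0 then -1 else 1) else 0)"

definition sym_bilinear_form :: "('v::euclidean_space \<Rightarrow> 'v \<Rightarrow> real) \<Rightarrow> bool" where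
  "sym_bilinear_form tau \<longleftrightarrow> bilinear tau \<and> (\<forall>x y. tau x y = tau y x)"

text \<open>tau has rank p+1 and Lorentzian signature: in some basis e_0,...,e_{d-1} of 'v
  it is diag(-1,1,...,1,0,...,0) with exactly one -1, p entries +1 and d-p-1 zeros
  (Sylvester normal form).\<close>
definition lorentzian_rank :: "('v::euclidean_space \<Rightarrow> 'v \<Rightarrow> real) \<Rightarrow> nat \<Rightarrow> bool" where
  "lorentzian_rank tau p \<longleftrightarrow> p < DIM('v) \<and>
     (\<exists>e :: nat \<Rightarrow> 'v. inj_on e {..<DIM('v)} \<and> independent (e ` {..<DIM('v)}) \<and>
        (\<forall>i<DIM('v). \<forall>j<DIM('v).
           tau (e i) (e j) = (if i = j then (if i = 0 then -1 else if i \<le> p then 1 else 0) else 0)))"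

definition Ker :: "('v::euclidean_space \<Rightarrow> 'v \<Rightarrow> real) \<Rightarrow> 'v set" where
  "Ker tau = {v. \<forall>w. tau v w = 0}"

text \<open>Longitudinal frames (tau_0,...,tau_p), stored as functions nat => 'v vanishing beyond p.\<close>
definition Lf :: "nat \<Rightarrow> ('v::euclidean_space \<Rightarrow> 'v \<Rightarrow> real) \<Rightarrow> (nat \<Rightarrow> 'v) set" where
  "Lf p tau = {f. (\<forall>A\<le>p. \<forall>B\<le>p. tau (f A) (f B) = eta A B) \<and> (\<forall>A>p. f A = 0)}"

text \<open>O(1,p): matrices Lambda (entry Lambda A B = Lambda^A_B, indices 0..p, zero outside)
  with Lambda^T eta Lambda = eta.\<close>
definition O1p :: "nat \<Rightarrow> (nat \<Rightarrow> nat \<Rightarrow> real) set" where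
  "O1p p = {L. (\<forall>B\<le>p. \<forall>C\<le>p. (\<Sum>A\<le>p. \<Sum>D\<le>p. L A B * eta A D * L D C) = eta B C) \<and>
               (\<forall>A B. (p < A \<or> p < B) \<longrightarrow> L A B = 0)}"

definition LG :: "nat \<Rightarrow> ('v::euclidean_space \<Rightarrow> 'v \<Rightarrow> real) \<Rightarrow> ((nat \<Rightarrow> nat \<Rightarrow> real) \<times> (nat \<Rightarrow> 'v)) set" where
  "LG p tau = {(L, V). L \<in> O1p p \<and> (\<forall>B\<le>p. V B \<in> Ker tau) \<and> (\<forall>B>p. V B = 0)}"

definition act :: "nat \<Rightarrow> (nat \<Rightarrow> 'v::euclidean_space) \<Rightarrow> (nat \<Rightarrow> nat \<Rightarrow> real) \<times> (nat \<Rightarrow> 'v) \<Rightarrow> (nat \<Rightarrow> 'v)" where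
  "act p f g = (\<lambda>B. if B \<le> p then (\<Sum>A\<le>p. fst g A B *\<^sub>R f A) + snd g B else 0)"

text \<open>Group law of LG_p, from the block-matrix product
  [[L1,0],[v1,1]] [[L2,0],[v2,1]] = [[L1 L2,0],[v1 L2 + v2,1]].\<close>
definition LG_mult :: "nat \<Rightarrow> (nat \<Rightarrow> nat \<Rightarrow> real) \<times> (nat \<Rightarrow> 'v::euclidean_space) \<Rightarrow>
    (nat \<Rightarrow> nat \<Rightarrow> real) \<times> (nat \<Rightarrow> 'v) \<Rightarrow> (nat \<Rightarrow> nat \<Rightarrow> real) \<times> (nat \<Rightarrow> 'v)" where
  "LG_mult p g h =
     ((\<lambda>A C. if A \<le> p \<and> C \<le> p then (\<Sum>B\<le>p. fst g A B * fst h B C) else 0),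
      (\<lambda>C. if C \<le> p then (\<Sum>B\<le>p. fst h B C *\<^sub>R snd g B) + snd h C else 0))"

definition LG_one :: "nat \<Rightarrow> (nat \<Rightarrow> nat \<Rightarrow> real) \<times> (nat \<Rightarrow> 'v::euclidean_space)" where
  "LG_one p = ((\<lambda>A B. if A = B \<and> A \<le> p then 1 else 0), (\<lambda>_. 0))"

end

theory Submission
  imports Defs
begin

text \<open>
  Pairing a transformed frame with the original one reads off the group element: since
  \<open>V\<^sub>B\<close> lies in the kernel, \<open>\<tau>((f\<cdot>(\<Lambda>,V))\<^sub>B, f\<^sub>A) = \<Lambda>\<^sup>A\<^sub>B \<eta>\<^sub>A\<^sub>A\<close>. This gives freeness
  and dictates the candidate \<open>\<Lambda>\<^sup>A\<^sub>B = \<eta>\<^sub>A\<^sub>A \<tau>(f'\<^sub>B, f\<^sub>A)\<close>, \<open>V\<^sub>B = f'\<^sub>B - \<Lambda>\<^sup>A\<^sub>B f\<^sub>A\<close> for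
  transitivity; \<open>\<Lambda>\<close> is Lorentzian because \<open>\<tau>\<close> restricted to the span of a frame is \<open>\<eta>\<close>.
  The remaining point is that \<open>V\<^sub>B\<close>, which by construction is only \<open>\<tau>\<close>-orthogonal to the
  frame, lies in \<open>Ker \<tau>\<close>. This is a dimension count: the frame spans a
  \<open>(p+1)\<close>-dimensional space meeting its \<open>\<tau>\<close>-orthogonal complement trivially, so the
  complement has dimension at most \<open>d - p - 1\<close>; it contains \<open>Ker \<tau>\<close>, which by the
  Sylvester normal form has dimension at least \<open>d - p - 1\<close>, so the two coincide.
\<close>

lemma bilinear_sum_scaleR_left:
  assumes "bilinear h"
  shows "h (\<Sum>i\<in>S. c i *\<^sub>R x i) y = (\<Sum>i\<in>S. c i * h (x i) y)"
proof -
  have lin: "linear (\<lambda>x. h x y)" using assms by (simp add: bilinear_def)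
  show ?thesis by (simp add: linear_sum[OF lin] linear_scale[OF lin])
qed

lemma bilinear_sum_scaleR_right:
  assumes "bilinear h"
  shows "h x (\<Sum>i\<in>S. c i *\<^sub>R y i) = (\<Sum>i\<in>S. c i * h x (y i))"
proof -
  have lin: "linear (\<lambda>y. h x y)" using assms by (simp add: bilinear_def)
  show ?thesis by (simp add: linear_sum[OF lin] linear_scale[OF lin])
qed

lemma eta_diag_square [simp]: "eta A A * eta A A = 1"
  by (simp add: eta_def)

lemma eta_diag_nonzero [simp]: "eta A A \<noteq> 0"
  by (simp add: eta_def)

lemma sum_eta_right:
  assumes "C \<le> p"
  shows "(\<Sum>A\<le>p. c A * eta A C) = c C * eta C C"
proof -
  have "(\<Sum>A\<le>p. c A * eta A C) = (\<Sum>A\<le>p. if A = C then c C * eta C C else 0)"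
    by (rule sum.cong) (auto simp: eta_def)
  then show ?thesis using assms by simp
qed

definition tau_orth :: "('v::real_vector \<Rightarrow> 'v \<Rightarrow> real) \<Rightarrow> 'v set \<Rightarrow> 'v set" where
  "tau_orth tau S = {y. \<forall>x\<in>S. tau y x = 0}"

lemma subspace_tau_orth:
  assumes "bilinear tau"
  shows "subspace (tau_orth tau S)"
  unfolding subspace_def tau_orth_def
  by (simp add: bilinear_lzero[OF assms] bilinear_ladd[OF assms] bilinear_lmul[OF assms])

lemma tau_orth_span:
  assumes "bilinear tau"
  shows "tau_orth tau (span S) = tau_orth tau S"
proof
  show "tau_orth tau (span S) \<subseteq> tau_orth tau S"
    using span_superset by (auto simp: tau_orth_def)
  show "tau_orth tau S \<subseteq> tau_orth tau (span S)"
  proof (clarsimp simp: tau_orth_def)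
    fix y x assume y: "\<forall>x\<in>S. tau y x = 0" and "x \<in> span S"
    from \<open>x \<in> span S\<close> show "tau y x = 0"
      by (induction rule: span_induct_alt)
         (simp_all add: y bilinear_rzero[OF assms] bilinear_radd[OF assms] bilinear_rmul[OF assms])
  qed
qed

lemma Ker_eq_tau_orth_UNIV: "Ker tau = tau_orth tau UNIV"
  by (simp add: Ker_def tau_orth_def)

lemma Ker_eq_tau_orth_spanning:
  assumes "bilinear tau" "span S = UNIV"
  shows "Ker tau = tau_orth tau S"
  using tau_orth_span[OF assms(1), of S] assms(2) by (simp add: Ker_eq_tau_orth_UNIV)

lemma Ker_subset_tau_orth: "Ker tau \<subseteq> tau_orth tau S"
  by (auto simp: Ker_def tau_orth_def)

lemma lorentzian_rank_dim_Ker: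
  fixes tau :: "'v::euclidean_space \<Rightarrow> 'v \<Rightarrow> real"
  assumes bil: "bilinear tau" and "lorentzian_rank tau p"
  shows "DIM('v) - Suc p \<le> dim (Ker tau)"
proof -
  obtain e :: "nat \<Rightarrow> 'v" where inj: "inj_on e {..<DIM('v)}"
    and ind: "independent (e ` {..<DIM('v)})"
    and tau_e: "\<forall>i<DIM('v). \<forall>j<DIM('v). tau (e i) (e j) =
       (if i = j then (if i = 0 then -1 else if i \<le> p then 1 else 0) else 0)"
    using assms(2) unfolding lorentzian_rank_def by blast
  have "dim (span (e ` {..<DIM('v)})) = DIM('v)"
    using dim_span_eq_card_independent[OF ind] card_image[OF inj] by simp
  then have span_e: "span (e ` {..<DIM('v)}) = UNIV"
    using dim_eq_full dim_span by metis
  have e_Ker: "e i \<in> Ker tau" if "p < i" "i < DIM('v)" for i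
    using tau_e that by (auto simp: Ker_eq_tau_orth_spanning[OF bil span_e] tau_orth_def)
  have sub: "{Suc p..<DIM('v)} \<subseteq> {..<DIM('v)}" by auto
  have "card (e ` {Suc p..<DIM('v)}) = DIM('v) - Suc p"
    using card_image[OF inj_on_subset[OF inj sub]] by simp
  moreover have "e ` {Suc p..<DIM('v)} \<subseteq> Ker tau" using e_Ker by auto
  moreover have "independent (e ` {Suc p..<DIM('v)})"
    using independent_mono[OF ind] sub by blast
  ultimately show ?thesis using independent_card_le_dim by metis
qed

lemma Lf_tau:
  assumes "f \<in> Lf p tau" "A \<le> p" "B \<le> p"
  shows "tau (f A) (f B) = eta A B"
  using assms by (simp add: Lf_def)

lemma Lf_inj_on:
  assumes "f \<in> Lf p tau"
  shows "inj_on f {..p}"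
proof (rule inj_onI)
  fix A C assume A: "A \<in> {..p}" and C: "C \<in> {..p}" and eq: "f A = f C"
  have "eta A C = eta A A"
    using Lf_tau[OF assms, of A C] Lf_tau[OF assms, of A A] A C eq by simp
  then show "A = C" by (auto simp: eta_def split: if_splits)
qed

lemma tau_combination_Lf:
  assumes "bilinear tau" "f \<in> Lf p tau" "C \<le> p"
  shows "tau (\<Sum>A\<le>p. u A *\<^sub>R f A) (f C) = u C * eta C C"
proof -
  have "tau (\<Sum>A\<le>p. u A *\<^sub>R f A) (f C) = (\<Sum>A\<le>p. u A * eta A C)"
    using assms by (simp add: bilinear_sum_scaleR_left Lf_tau)
  also have "\<dots> = u C * eta C C"
    using assms(3) by (rule sum_eta_right)
  finally show ?thesis .
qed

lemma tau_combinations_Lf: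
  assumes "bilinear tau" "f \<in> Lf p tau"
  shows "tau (\<Sum>A\<le>p. a A *\<^sub>R f A) (\<Sum>D\<le>p. b D *\<^sub>R f D) = (\<Sum>A\<le>p. \<Sum>D\<le>p. a A * eta A D * b D)"
  using assms
  by (simp add: bilinear_sum_scaleR_left bilinear_sum_scaleR_right Lf_tau sum_distrib_left mult_ac)

lemma span_LfE:
  assumes "f \<in> Lf p tau" "x \<in> span (f ` {..p})"
  obtains u where "x = (\<Sum>A\<le>p. u A *\<^sub>R f A)"
proof -
  from assms(2) obtain c where "x = (\<Sum>v\<in>f ` {..p}. c v *\<^sub>R v)"
    using span_finite[of "f ` {..p}"] by auto
  then have "x = (\<Sum>A\<le>p. c (f A) *\<^sub>R f A)"
    by (simp add: sum.reindex[OF Lf_inj_on[OF assms(1)]])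
  then show thesis by (rule that)
qed

lemma Lf_independent:
  assumes "bilinear tau" "f \<in> Lf p tau"
  shows "independent (f ` {..p})"
proof (rule independent_if_scalars_zero)
  fix c v assume sum0: "(\<Sum>v\<in>f ` {..p}. c v *\<^sub>R v) = 0" and "v \<in> f ` {..p}"
  then obtain C where C: "C \<le> p" and v: "v = f C" by auto
  have "(\<Sum>A\<le>p. c (f A) *\<^sub>R f A) = 0"
    using sum0 by (simp add: sum.reindex[OF Lf_inj_on[OF assms(2)]])
  then have "c (f C) * eta C C = 0"
    using tau_combination_Lf[OF assms C, of "\<lambda>A. c (f A)"] bilinear_lzero[OF assms(1)] by simp
  then show "c v = 0" using v by simp
qed simp

lemma dim_span_Lf:
  assumes "bilinear tau" "f \<in> Lf p tau"
  shows "dim (span (f ` {..p})) = Suc p"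
  using dim_span_eq_card_independent[OF Lf_independent[OF assms]]
    card_image[OF Lf_inj_on[OF assms(2)]] by simp

lemma span_Lf_Int_tau_orth:
  assumes "bilinear tau" "f \<in> Lf p tau"
  shows "span (f ` {..p}) \<inter> tau_orth tau (f ` {..p}) = {0}"
proof -
  have "x = 0" if x: "x \<in> span (f ` {..p})" and orth: "x \<in> tau_orth tau (f ` {..p})" for x
  proof -
    obtain u where xu: "x = (\<Sum>A\<le>p. u A *\<^sub>R f A)"
      using span_LfE[OF assms(2) x] .
    have "u C = 0" if "C \<le> p" for C
      using tau_combination_Lf[OF assms that, of u] orth xu that by (simp add: tau_orth_def)
    then show "x = 0" using xu by simp
  qed
  moreover have "0 \<in> tau_orth tau (f ` {..p})"
    using subspace_0[OF subspace_tau_orth[OF assms(1)]] .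
  ultimately show ?thesis using span_zero by blast
qed

lemma dim_tau_orth_Lf:
  fixes tau :: "'v::euclidean_space \<Rightarrow> 'v \<Rightarrow> real"
  assumes "bilinear tau" "f \<in> Lf p tau"
  shows "dim (tau_orth tau (f ` {..p})) \<le> DIM('v) - Suc p"
proof -
  let ?W = "span (f ` {..p})" and ?O = "tau_orth tau (f ` {..p})"
  have "dim {x + y |x y. x \<in> ?W \<and> y \<in> ?O} + dim (?W \<inter> ?O) = dim ?W + dim ?O"
    using dim_sums_Int[OF subspace_span subspace_tau_orth[OF assms(1)]] .
  moreover have "dim {x + y |x y. x \<in> ?W \<and> y \<in> ?O} \<le> DIM('v)"
    using dim_subset_UNIV by simp
  ultimately show ?thesis
    using span_Lf_Int_tau_orth[OF assms] dim_span_Lf[OF assms] by simp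
qed

lemma Ker_eq_tau_orth_Lf:
  fixes tau :: "'v::euclidean_space \<Rightarrow> 'v \<Rightarrow> real"
  assumes "bilinear tau" "lorentzian_rank tau p" "f \<in> Lf p tau"
  shows "Ker tau = tau_orth tau (f ` {..p})"
proof (rule subspace_dim_equal)
  show "subspace (Ker tau)"
    unfolding Ker_eq_tau_orth_UNIV using assms(1) by (rule subspace_tau_orth)
  show "subspace (tau_orth tau (f ` {..p}))"
    using assms(1) by (rule subspace_tau_orth)
  show "Ker tau \<subseteq> tau_orth tau (f ` {..p})"
    by (rule Ker_subset_tau_orth)
  show "dim (tau_orth tau (f ` {..p})) \<le> dim (Ker tau)"
    using dim_tau_orth_Lf[OF assms(1,3)] lorentzian_rank_dim_Ker[OF assms(1,2)] by simp
qed

lemma tau_add_Ker: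
  assumes "sym_bilinear_form tau" "k \<in> Ker tau" "k' \<in> Ker tau"
  shows "tau (x + k) (y + k') = tau x y"
proof -
  have bil: "bilinear tau" and "tau x k' = tau k' x"
    using assms(1) by (simp_all add: sym_bilinear_form_def)
  moreover have "tau k' x = 0" "tau k y = 0" "tau k k' = 0"
    using assms(2,3) by (simp_all add: Ker_def)
  ultimately show ?thesis by (simp add: bilinear_ladd[OF bil] bilinear_radd[OF bil])
qed

lemma act_apply:
  assumes "B \<le> p"
  shows "act p f (L, V) B = (\<Sum>A\<le>p. L A B *\<^sub>R f A) + V B"
  using assms by (simp add: act_def)

lemma act_in_Lf:
  assumes sym: "sym_bilinear_form tau" and f: "f \<in> Lf p tau" and g: "(L, V) \<in> LG p tau"
  shows "act p f (L, V) \<in> Lf p tau"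
proof -
  have bil: "bilinear tau" using sym by (simp add: sym_bilinear_form_def)
  have "tau (act p f (L, V) B) (act p f (L, V) C) = eta B C" if B: "B \<le> p" and C: "C \<le> p" for B C
  proof -
    have "tau (act p f (L, V) B) (act p f (L, V) C) =
        tau (\<Sum>A\<le>p. L A B *\<^sub>R f A) (\<Sum>D\<le>p. L D C *\<^sub>R f D)"
      using g B C by (simp add: act_apply LG_def tau_add_Ker[OF sym])
    also have "\<dots> = (\<Sum>A\<le>p. \<Sum>D\<le>p. L A B * eta A D * L D C)"
      by (rule tau_combinations_Lf[OF bil f])
    also have "\<dots> = eta B C"
      using g B C by (simp add: LG_def O1p_def)
    finally show ?thesis .
  qed
  then show ?thesis by (simp add: Lf_def act_def)
qed

lemma act_LG_one:
  assumes "f \<in> Lf p tau"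
  shows "act p f (LG_one p) = f"
proof
  fix B
  show "act p f (LG_one p) B = f B"
  proof (cases "B \<le> p")
    case True
    have "(\<Sum>A\<le>p. (if A = B \<and> A \<le> p then 1 else 0) *\<^sub>R f A) = (\<Sum>A\<le>p. if A = B then f B else 0)"
      by (rule sum.cong) auto
    then show ?thesis using True by (simp add: act_def LG_one_def)
  next
    case False
    then show ?thesis using assms by (simp add: act_def Lf_def)
  qed
qed

lemma act_LG_mult: "act p (act p f g) h = act p f (LG_mult p g h)"
proof
  fix C
  show "act p (act p f g) h C = act p f (LG_mult p g h) C"
  proof (cases "C \<le> p")
    case True
    have "(\<Sum>B\<le>p. fst h B C *\<^sub>R act p f g B) =
        (\<Sum>B\<le>p. \<Sum>A\<le>p. (fst h B C * fst g A B) *\<^sub>R f A) + (\<Sum>B\<le>p. fst h B C *\<^sub>R snd g B)"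
      by (simp add: act_def sum.distrib[symmetric] scaleR_add_right scaleR_sum_right)
    also have "\<dots> = (\<Sum>A\<le>p. fst (LG_mult p g h) A C *\<^sub>R f A) + (\<Sum>B\<le>p. fst h B C *\<^sub>R snd g B)"
      using True by (subst sum.swap) (simp add: LG_mult_def scaleR_sum_left mult.commute)
    finally show ?thesis
      using True by (simp add: act_def LG_mult_def add.assoc)
  next
    case False
    then show ?thesis by (simp add: act_def)
  qed
qed

lemma tau_act_Lf:
  assumes bil: "bilinear tau" and f: "f \<in> Lf p tau" and g: "(L, V) \<in> LG p tau"
    and A: "A \<le> p" and B: "B \<le> p"
  shows "tau (act p f (L, V) B) (f A) = L A B * eta A A"
proof -
  have "tau (V B) (f A) = 0" using g B by (simp add: LG_def Ker_def)
  then show ?thesis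
    using B by (simp add: act_apply bilinear_ladd[OF bil] tau_combination_Lf[OF bil f A])
qed

lemma act_free:
  assumes bil: "bilinear tau" and f: "f \<in> Lf p tau"
    and g: "(L, V) \<in> LG p tau" and g': "(L', V') \<in> LG p tau"
    and eq: "act p f (L, V) = act p f (L', V')"
  shows "(L, V) = (L', V')"
proof -
  have "L A B = L' A B" for A B
  proof (cases "A \<le> p \<and> B \<le> p")
    case True
    then have "L A B * eta A A = tau (act p f (L, V) B) (f A)"
      using tau_act_Lf[OF bil f g] by simp
    also have "\<dots> = L' A B * eta A A"
      using True tau_act_Lf[OF bil f g'] eq by simp
    finally show ?thesis by simp
  next
    case False
    then show ?thesis using g g' by (auto simp: LG_def O1p_def)
  qed
  then have L: "L = L'" by blast
  have "V B = V' B" for B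
  proof (cases "B \<le> p")
    case True
    have "act p f (L, V) B = act p f (L', V') B" using eq by simp
    then show ?thesis using True L by (simp add: act_apply)
  next
    case False
    then show ?thesis using g g' by (simp add: LG_def)
  qed
  then show ?thesis using L by auto
qed

lemma act_transitive:
  fixes tau :: "'v::euclidean_space \<Rightarrow> 'v \<Rightarrow> real"
  assumes sym: "sym_bilinear_form tau" and lr: "lorentzian_rank tau p"
    and f: "f \<in> Lf p tau" and f': "f' \<in> Lf p tau"
  shows "\<exists>g\<in>LG p tau. f' = act p f g"
proof -
  have bil: "bilinear tau" using sym by (simp add: sym_bilinear_form_def)
  define L where "L A B = (if A \<le> p \<and> B \<le> p then eta A A * tau (f' B) (f A) else 0)" for A B
  define V where "V B = (if B \<le> p then f' B - (\<Sum>A\<le>p. L A B *\<^sub>R f A) else 0)" for B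
  have V_Ker: "V B \<in> Ker tau" if B: "B \<le> p" for B
  proof -
    have "tau (V B) (f C) = 0" if C: "C \<le> p" for C
      using B C tau_combination_Lf[OF bil f C, of "\<lambda>A. L A B"]
      by (simp add: V_def L_def bilinear_lsub[OF bil] mult_ac)
    then show ?thesis
      by (auto simp: Ker_eq_tau_orth_Lf[OF bil lr f] tau_orth_def)
  qed
  have f'_eq: "f' B = (\<Sum>A\<le>p. L A B *\<^sub>R f A) + V B" if "B \<le> p" for B
    using that by (simp add: V_def)
  have "L \<in> O1p p"
  proof -
    have "(\<Sum>A\<le>p. \<Sum>D\<le>p. L A B * eta A D * L D C) = eta B C" if B: "B \<le> p" and C: "C \<le> p" for B C
    proof -
      have "(\<Sum>A\<le>p. \<Sum>D\<le>p. L A B * eta A D * L D C) =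
          tau (\<Sum>A\<le>p. L A B *\<^sub>R f A) (\<Sum>D\<le>p. L D C *\<^sub>R f D)"
        by (rule tau_combinations_Lf[OF bil f, symmetric])
      also have "\<dots> = tau (f' B) (f' C)"
        using B C V_Ker by (simp add: f'_eq tau_add_Ker[OF sym])
      also have "\<dots> = eta B C"
        using f' B C by (rule Lf_tau)
      finally show ?thesis .
    qed
    then show ?thesis by (simp add: O1p_def L_def)
  qed
  then have "(L, V) \<in> LG p tau" using V_Ker by (simp add: LG_def V_def)
  moreover have "f' = act p f (L, V)"
  proof
    fix B show "f' B = act p f (L, V) B"
      using f' f'_eq by (cases "B \<le> p") (simp_all add: act_apply act_def Lf_def)
  qed
  ultimately show ?thesis by blast
qed

theorem proposition2:
  fixes tau :: "'v::euclidean_space \<Rightarrow> 'v \<Rightarrow> real" and p :: nat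
  assumes "sym_bilinear_form tau"
    and "lorentzian_rank tau p"
  shows "(\<forall>f\<in>Lf p tau. \<forall>g\<in>LG p tau. act p f g \<in> Lf p tau)
       \<and> (\<forall>f\<in>Lf p tau. act p f (LG_one p) = f)
       \<and> (\<forall>f\<in>Lf p tau. \<forall>g\<in>LG p tau. \<forall>h\<in>LG p tau.
            act p (act p f g) h = act p f (LG_mult p g h))
       \<and> (\<forall>f\<in>Lf p tau. \<forall>f'\<in>Lf p tau. \<exists>!g. g \<in> LG p tau \<and> f' = act p f g)"
proof -
  have bil: "bilinear tau" using assms(1) by (simp add: sym_bilinear_form_def)
  have closed: "act p f g \<in> Lf p tau" if "f \<in> Lf p tau" "g \<in> LG p tau" for f g
    using act_in_Lf[OF assms(1) that(1)] that(2) by (cases g) simp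
  have free: "g = g'"
    if "f \<in> Lf p tau" "g \<in> LG p tau" "g' \<in> LG p tau" "act p f g = act p f g'" for f g g'
    using act_free[OF bil that(1)] that(2-4) by (cases g, cases g') simp
  have unique: "\<exists>!g. g \<in> LG p tau \<and> f' = act p f g" if f: "f \<in> Lf p tau" and f': "f' \<in> Lf p tau" for f f'
  proof -
    obtain g where g: "g \<in> LG p tau" "f' = act p f g"
      using act_transitive[OF assms f f'] by blast
    show ?thesis
      by (rule ex1I[of _ g]) (use g free[OF f] in auto)
  qed
  show ?thesis by (simp add: closed act_LG_one act_LG_mult unique)
qed

end
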